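(* Let $n\ge1$ be an integer, $1<p<p^*(n)$, where $p^*(n)=\infty$ if $n=1,2$ and $p^*(n)=\frac{n+2}{n-2}$ if $n\ge3$. Let $A_0$ be the unique positive radially symmetric classical solution of $\Delta A - A + A^p=0$ in $\mathbb{R}^n$, $\lim_{|x|\to\infty}A(x)=0$, $A(0)=\max A$, let $\alpha=\int_{\mathbb{R}^n}A_0^2\,dy$, and let $f(\omega)=(\omega-1)\omega^{\frac n2-\frac{2}{p-1}}$ for $\omega>0$. For $k>0$ consider the problem \[ \Delta A - A + A^p - kA\int_{\mathbb{R}^n} A^2\,dx = 0 \ \text{ in } \mathbb{R}^n,\qquad \lim_{|x|\to\infty}A(x)=0,\qquad A(0)=\max_{x\in\mathbb{R}^n}A(x). \tag{P} \] (i) If $k>0$ and $\omega>0$ satisfy $f(\omega)=k\alpha$, then $A(x):=\omega^{\frac{1}{p-1}}A_0(\sqrt{\omega}\,x)$ is a solution of (P). (ii) Conversely, if $A$ is a positive radially symmetric classical solution of (P) with $k>0$, then there exists $\omega>0$ with $f(\omega)=k\alpha$, and $A(x)=\omega^{\frac{1}{p-1}}A_0(\sqrt{\omega}\,x)$ for all $x\in\mathbb{R}^n$.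
   Context: The existence and uniqueness of $A_0$ for $1<p<p^*(n)$, and its exponential decay (so $0<\alpha<\infty$), are known facts used to define $A_0$ and $\alpha$. *)

theory Defs
  imports "HOL-Analysis.Analysis"
begin

text \<open>Functions on R^n are modelled as functions on real^'n (n = CARD('n) >= 1).\<close>

definition C2 :: "(real^'n \<Rightarrow> real) \<Rightarrow> bool" where
  "C2 f \<longleftrightarrow> (\<forall>x. f differentiable (at x))
     \<and> (\<forall>v x. (\<lambda>y. frechet_derivative f (at y) v) differentiable (at x))
     \<and> (\<forall>v w. continuous_on UNIV
            (\<lambda>y. frechet_derivative (\<lambda>z. frechet_derivative f (at z) v) (at y) w))"

definition laplacian :: "(real^'n \<Rightarrow> real) \<Rightarrow> real^'n \<Rightarrow> real" where
  "laplacian f x = (\<Sum>i\<in>UNIV.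
      frechet_derivative (\<lambda>y. frechet_derivative f (at y) (axis i 1)) (at x) (axis i 1))"

definition radial :: "(real^'n \<Rightarrow> real) \<Rightarrow> bool" where
  "radial f \<longleftrightarrow> (\<forall>x y. norm x = norm y \<longrightarrow> f x = f y)"

definition subcritical :: "nat \<Rightarrow> real \<Rightarrow> bool" where
  "subcritical n p \<longleftrightarrow> 1 < p \<and> (n \<ge> 3 \<longrightarrow> p < (real n + 2) / (real n - 2))"

definition ground_state :: "real \<Rightarrow> (real^'n \<Rightarrow> real) \<Rightarrow> bool" where
  "ground_state p A \<longleftrightarrow> C2 A \<and> (\<forall>x. A x > 0) \<and> radial A
     \<and> (\<forall>x. laplacian A x - A x + A x powr p = 0)
     \<and> (A \<longlongrightarrow> 0) at_infinity \<and> (\<forall>x. A x \<le> A 0)"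

text \<open>Classical solution of problem (P) (the nonlocal term requires A^2 integrable).\<close>
definition solves_P :: "real \<Rightarrow> real \<Rightarrow> (real^'n \<Rightarrow> real) \<Rightarrow> bool" where
  "solves_P p k A \<longleftrightarrow> C2 A \<and> (\<lambda>x. (A x)^2) integrable_on UNIV
     \<and> (\<forall>x. laplacian A x - A x + A x powr p - k * A x * integral UNIV (\<lambda>y. (A y)^2) = 0)
     \<and> (A \<longlongrightarrow> 0) at_infinity \<and> (\<forall>x. A x \<le> A 0)"

definition fw :: "nat \<Rightarrow> real \<Rightarrow> real \<Rightarrow> real" where
  "fw n p \<omega> = (\<omega> - 1) * \<omega> powr (real n / 2 - 2 / (p - 1))"

end

theory Submission
  imports Defs
begin

text \<open>The rescaling \<open>A \<mapsto> \<omega> powr (1/(p-1)) * A (sqrt \<omega> x)\<close> turns solutions of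
  \<open>\<Delta>A - A + A^p = 0\<close> into solutions of \<open>\<Delta>A - \<omega>A + A^p = 0\<close> and multiplies \<open>\<integral>A\<^sup>2\<close> by
  \<open>\<omega> powr (2/(p-1) - n/2)\<close>. A solution of (P) solves the local equation with
  \<open>\<omega> = 1 + k\<integral>A\<^sup>2\<close>, so by uniqueness of the ground state it is the \<open>\<omega>\<close>-rescaled \<open>A\<^sub>0\<close>;
  the nonlocal condition \<open>\<omega> - 1 = k\<integral>A\<^sup>2\<close> then reads \<open>f(\<omega>) = k\<alpha>\<close>, and conversely.\<close>

lemma has_integral_scaleR_UNIV:
  fixes f :: "'a::euclidean_space \<Rightarrow> 'b::banach"
  assumes f: "(f has_integral i) UNIV" and m: "m > 0"
  shows "((\<lambda>x. f (m *\<^sub>R x)) has_integral i /\<^sub>R m ^ DIM('a)) UNIV"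
proof (subst has_integral', intro allI impI)
  fix e :: real assume "e > 0"
  then have "e * m ^ DIM('a) > 0" using m by simp
  then obtain B where "B > 0" and B: "\<And>a b. ball 0 B \<subseteq> cbox a b \<Longrightarrow>
      \<exists>z. (f has_integral z) (cbox a b) \<and> norm (z - i) < e * m ^ DIM('a)"
    using f[unfolded has_integral'[of f]] by (simp del: mult_pos_pos) blast
  show "\<exists>B>0. \<forall>a b. ball 0 B \<subseteq> cbox a b \<longrightarrow> (\<exists>z. ((\<lambda>x. if x \<in> UNIV then f (m *\<^sub>R x) else 0)
      has_integral z) (cbox a b) \<and> norm (z - i /\<^sub>R m ^ DIM('a)) < e)"
  proof (intro exI[of _ "B / m"] conjI allI impI)
    show "B / m > 0" using \<open>B > 0\<close> m by simp
    fix a b :: 'a assume ab: "ball 0 (B / m) \<subseteq> cbox a b"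
    have "ball 0 B \<subseteq> cbox (m *\<^sub>R a) (m *\<^sub>R b)"
    proof
      fix y :: 'a assume "y \<in> ball 0 B"
      then have "y /\<^sub>R m \<in> cbox a b" using ab m by (auto simp: divide_simps)
      then show "y \<in> cbox (m *\<^sub>R a) (m *\<^sub>R b)"
        using m by (auto simp: mem_box inner_scaleR_left field_simps)
    qed
    then obtain z where z: "(f has_integral z) (cbox (m *\<^sub>R a) (m *\<^sub>R b))"
      and "norm (z - i) < e * m ^ DIM('a)" using B by blast
    moreover have "norm (z /\<^sub>R m ^ DIM('a) - i /\<^sub>R m ^ DIM('a)) = norm (z - i) / m ^ DIM('a)"
      using m by (simp flip: scaleR_diff_right add: divide_inverse_commute)
    ultimately have "norm (z /\<^sub>R m ^ DIM('a) - i /\<^sub>R m ^ DIM('a)) < e"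
      using m by (simp add: pos_divide_less_eq)
    moreover have "((\<lambda>x. f (m *\<^sub>R x)) has_integral z /\<^sub>R m ^ DIM('a)) (cbox a b)"
      using has_integral_affinity'[OF z m, of 0] m by simp
    ultimately show "\<exists>z. ((\<lambda>x. if x \<in> UNIV then f (m *\<^sub>R x) else 0) has_integral z) (cbox a b)
        \<and> norm (z - i /\<^sub>R m ^ DIM('a)) < e" by auto
  qed
qed

lemma has_derivative_rescale:
  fixes f :: "'a::real_normed_vector \<Rightarrow> real"
  assumes "f differentiable (at (s *\<^sub>R x))"
  shows "((\<lambda>y. c * f (s *\<^sub>R y)) has_derivative
           (\<lambda>v. c * s * frechet_derivative f (at (s *\<^sub>R x)) v)) (at x)"
proof -
  let ?f' = "frechet_derivative f (at (s *\<^sub>R x))"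
  have f': "(f has_derivative ?f') (at (s *\<^sub>R x))"
    using assms frechet_derivative_works by blast
  have "((\<lambda>y. f (s *\<^sub>R y)) has_derivative (\<lambda>v. ?f' (s *\<^sub>R v))) (at x)"
    using has_derivative_compose[OF has_derivative_scaleR_right[OF has_derivative_ident] f']
    by simp
  then have "((\<lambda>y. c * f (s *\<^sub>R y)) has_derivative (\<lambda>v. c * ?f' (s *\<^sub>R v))) (at x)"
    by (rule has_derivative_mult_right)
  then show ?thesis
    using linear_cmul[OF has_derivative_linear[OF f']] by (simp add: mult.assoc)
qed

lemma frechet_derivative_rescale:
  fixes f :: "'a::real_normed_vector \<Rightarrow> real"
  assumes "f differentiable (at (s *\<^sub>R x))"
  shows "frechet_derivative (\<lambda>y. c * f (s *\<^sub>R y)) (at x)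
           = (\<lambda>v. c * s * frechet_derivative f (at (s *\<^sub>R x)) v)"
  using frechet_derivative_at[OF has_derivative_rescale[OF assms]] by simp

lemma differentiable_rescale:
  fixes f :: "'a::real_normed_vector \<Rightarrow> real"
  assumes "f differentiable (at (s *\<^sub>R x))"
  shows "(\<lambda>y. c * f (s *\<^sub>R y)) differentiable (at x)"
  using has_derivative_rescale[OF assms] unfolding differentiable_def by blast

lemma frechet_derivative_rescale_eq:
  fixes f :: "real^'n \<Rightarrow> real"
  assumes "C2 f"
  shows "(\<lambda>y. frechet_derivative (\<lambda>z. c * f (s *\<^sub>R z)) (at y) v)
           = (\<lambda>y. (c * s) * frechet_derivative f (at (s *\<^sub>R y)) v)"
proof
  fix y :: "real^'n"
  have "f differentiable (at (s *\<^sub>R y))"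
    using assms unfolding C2_def by blast
  from frechet_derivative_rescale[OF this, of c]
  show "frechet_derivative (\<lambda>z. c * f (s *\<^sub>R z)) (at y) v
          = (c * s) * frechet_derivative f (at (s *\<^sub>R y)) v" by simp
qed

lemma second_frechet_derivative_rescale:
  fixes f :: "real^'n \<Rightarrow> real"
  assumes "C2 f"
  shows "frechet_derivative (\<lambda>y. frechet_derivative (\<lambda>z. c * f (s *\<^sub>R z)) (at y) v) (at x) w
           = c * s^2 * frechet_derivative (\<lambda>z. frechet_derivative f (at z) v) (at (s *\<^sub>R x)) w"
proof -
  have "(\<lambda>y. frechet_derivative f (at y) v) differentiable (at (s *\<^sub>R x))"
    using assms unfolding C2_def by blast
  from frechet_derivative_rescale[OF this, of "c * s"]
  show ?thesis
    unfolding frechet_derivative_rescale_eq[OF assms] by (simp add: power2_eq_square)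
qed

lemma C2_rescale:
  fixes f :: "real^'n \<Rightarrow> real"
  assumes "C2 f"
  shows "C2 (\<lambda>y. c * f (s *\<^sub>R y))"
  unfolding C2_def second_frechet_derivative_rescale[OF assms]
  unfolding frechet_derivative_rescale_eq[OF assms]
proof (intro conjI allI)
  have f: "\<And>x. f differentiable (at x)"
    "\<And>v x. (\<lambda>y. frechet_derivative f (at y) v) differentiable (at x)"
    "\<And>v w. continuous_on UNIV (\<lambda>y. frechet_derivative (\<lambda>z. frechet_derivative f (at z) v) (at y) w)"
    using assms unfolding C2_def by blast+
  show "(\<lambda>y. c * f (s *\<^sub>R y)) differentiable (at x)" for x
    by (rule differentiable_rescale[OF f(1)])
  show "(\<lambda>y. c * s * frechet_derivative f (at (s *\<^sub>R y)) v) differentiable (at x)" for v x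
    by (rule differentiable_rescale[OF f(2)])
  show "continuous_on UNIV (\<lambda>y. c * s\<^sup>2 *
          frechet_derivative (\<lambda>z. frechet_derivative f (at z) v) (at (s *\<^sub>R y)) w)" for v w
    by (intro continuous_on_mult_left continuous_on_compose2[OF f(3)] continuous_intros) auto
qed

lemma laplacian_rescale:
  fixes f :: "real^'n \<Rightarrow> real"
  assumes "C2 f"
  shows "laplacian (\<lambda>y. c * f (s *\<^sub>R y)) x = c * s^2 * laplacian f (s *\<^sub>R x)"
  unfolding laplacian_def second_frechet_derivative_rescale[OF assms]
  by (simp add: sum_distrib_left)

lemma tendsto_at_infinity_rescale:
  fixes f :: "'a::real_normed_vector \<Rightarrow> real"
  assumes "(f \<longlongrightarrow> 0) at_infinity" and "s \<noteq> 0"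
  shows "((\<lambda>x. c * f (s *\<^sub>R x)) \<longlongrightarrow> 0) at_infinity"
proof -
  have "filterlim (\<lambda>x. \<bar>s\<bar> * norm x) at_top at_infinity"
    using assms(2) by (intro filterlim_tendsto_pos_mult_at_top[OF tendsto_const _ filterlim_norm_at_top]) auto
  then have "filterlim (\<lambda>x. s *\<^sub>R x) at_infinity at_infinity"
    by (intro filterlim_norm_at_top_imp_at_infinity) simp
  then have "((\<lambda>x. f (s *\<^sub>R x)) \<longlongrightarrow> 0) at_infinity"
    by (rule filterlim_compose[OF assms(1)])
  then show ?thesis
    by (rule tendsto_mult_right_zero)
qed

definition rescale :: "real \<Rightarrow> real \<Rightarrow> ('a::real_normed_vector \<Rightarrow> real) \<Rightarrow> 'a \<Rightarrow> real" where
  "rescale p \<omega> A = (\<lambda>x. \<omega> powr (1 / (p - 1)) * A (sqrt \<omega> *\<^sub>R x))"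

lemma rescale_rescale_inverse:
  assumes "\<omega> > 0"
  shows "rescale p \<omega> (rescale p (1 / \<omega>) A) = A"
proof
  fix x
  have "\<omega> powr (1 / (p - 1)) * (1 / \<omega>) powr (1 / (p - 1)) = 1"
    using assms by (simp flip: powr_mult)
  then show "rescale p \<omega> (rescale p (1 / \<omega>) A) x = A x"
    using assms unfolding rescale_def by (simp add: real_sqrt_divide mult.assoc[symmetric])
qed

lemma laplacian_rescale_equation:
  fixes A :: "real^'n \<Rightarrow> real"
  assumes "C2 A" and "p > 1" and "\<omega> > 0" and "A (sqrt \<omega> *\<^sub>R x) \<ge> 0"
  shows "laplacian (rescale p \<omega> A) x - \<mu> * \<omega> * rescale p \<omega> A x + rescale p \<omega> A x powr p
       = \<omega> powr (p / (p - 1)) * (laplacian A (sqrt \<omega> *\<^sub>R x) - \<mu> * A (sqrt \<omega> *\<^sub>R x)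
           + A (sqrt \<omega> *\<^sub>R x) powr p)"
proof -
  define c where "c = \<omega> powr (1 / (p - 1))"
  define y where "y = sqrt \<omega> *\<^sub>R x"
  have "c * \<omega> = \<omega> powr (1 / (p - 1) + 1)"
    using assms(3) by (simp add: c_def powr_add)
  also have "1 / (p - 1) + 1 = p / (p - 1)"
    using assms(2) by (simp add: field_simps)
  finally have c\<omega>: "c * \<omega> = \<omega> powr (p / (p - 1))" .
  have "(c * A y) powr p = c powr p * A y powr p"
    using assms(4) by (simp add: c_def y_def powr_mult)
  also have "c powr p = c * \<omega>"
    using c\<omega> by (simp add: c_def powr_powr)
  finally have "(c * A y) powr p = c * \<omega> * A y powr p" .
  moreover have "laplacian (\<lambda>x. c * A (sqrt \<omega> *\<^sub>R x)) x = c * \<omega> * laplacian A y"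
    using assms(3) by (simp add: laplacian_rescale[OF assms(1)] y_def)
  ultimately show ?thesis
    unfolding rescale_def c_def[symmetric] y_def[symmetric] c\<omega>[symmetric]
    by (simp add: algebra_simps)
qed

lemma has_integral_rescale_square:
  fixes A :: "'a::euclidean_space \<Rightarrow> real"
  assumes "((\<lambda>x. (A x)^2) has_integral I) UNIV" and "\<omega> > 0"
  shows "((\<lambda>x. (rescale p \<omega> A x)^2) has_integral
           \<omega> powr (2 / (p - 1) - DIM('a) / 2) * I) UNIV"
proof -
  have "((\<lambda>x. (A (sqrt \<omega> *\<^sub>R x))^2) has_integral I / sqrt \<omega> ^ DIM('a)) UNIV"
    using has_integral_scaleR_UNIV[OF assms(1), of "sqrt \<omega>"] assms(2) by (simp add: divide_inverse_commute)
  then have "((\<lambda>x. (\<omega> powr (1 / (p - 1)))^2 * (A (sqrt \<omega> *\<^sub>R x))^2) has_integral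
               (\<omega> powr (1 / (p - 1)))^2 * (I / sqrt \<omega> ^ DIM('a))) UNIV"
    by (rule has_integral_mult_right)
  moreover have "(\<omega> powr (1 / (p - 1)))^2 = \<omega> powr (2 / (p - 1))"
    using assms(2) by (simp flip: powr_realpow add: powr_powr)
  moreover have "sqrt \<omega> ^ DIM('a) = \<omega> powr (DIM('a) / 2)"
    using assms(2) by (simp flip: powr_realpow add: powr_half_sqrt[symmetric] powr_powr)
  ultimately show ?thesis
    using assms(2) unfolding rescale_def by (simp add: power_mult_distrib powr_diff)
qed

lemma fw_eq_iff:
  assumes "\<omega> > 0"
  shows "fw n p \<omega> = k * \<alpha> \<longleftrightarrow> \<omega> - 1 = k * (\<omega> powr (2 / (p - 1) - n / 2) * \<alpha>)"
proof -
  let ?e = "\<omega> powr (2 / (p - 1) - n / 2)"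
  have "fw n p \<omega> * ?e = \<omega> - 1"
    using assms unfolding fw_def by (simp add: mult.assoc flip: powr_add)
  moreover have "fw n p \<omega> = k * \<alpha> \<longleftrightarrow> fw n p \<omega> * ?e = k * \<alpha> * ?e"
    using assms by simp
  ultimately show ?thesis
    by (simp add: ac_simps)
qed

lemma solves_P_rescale_of_ground_state:
  fixes A0 :: "real^'n \<Rightarrow> real"
  assumes "ground_state p A0" and "p > 1" and "((\<lambda>y. (A0 y)^2) has_integral \<alpha>) UNIV"
    and "\<omega> > 0" and "fw CARD('n) p \<omega> = k * \<alpha>"
  shows "solves_P p k (rescale p \<omega> A0)"
proof -
  let ?A = "rescale p \<omega> A0"
  have A0: "C2 A0" "\<And>x. A0 x > 0" "\<And>x. laplacian A0 x - A0 x + A0 x powr p = 0"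
    "(A0 \<longlongrightarrow> 0) at_infinity" "\<And>x. A0 x \<le> A0 0"
    using assms(1) unfolding ground_state_def by blast+
  have int: "((\<lambda>x. (?A x)^2) has_integral \<omega> powr (2 / (p - 1) - CARD('n) / 2) * \<alpha>) UNIV"
    using has_integral_rescale_square[OF assms(3,4)] by simp
  define I where "I = integral UNIV (\<lambda>y. (?A y)^2)"
  have \<omega>: "\<omega> - 1 - k * I = 0"
    using int assms(4,5) fw_eq_iff by (simp add: I_def integral_unique)
  have "laplacian ?A x - \<omega> * ?A x + ?A x powr p = 0" for x
  proof -
    have "A0 (sqrt \<omega> *\<^sub>R x) \<ge> 0"
      using A0(2) less_imp_le by blast
    from laplacian_rescale_equation[OF A0(1) assms(2,4) this, where \<mu> = 1]
    show ?thesis using A0(3) by simp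
  qed
  moreover have "laplacian ?A x - ?A x + ?A x powr p - k * ?A x * I
      = (laplacian ?A x - \<omega> * ?A x + ?A x powr p) + (\<omega> - 1 - k * I) * ?A x" for x
    by (simp add: algebra_simps)
  ultimately have "laplacian ?A x - ?A x + ?A x powr p - k * ?A x * I = 0" for x
    unfolding \<omega> by simp
  moreover have "C2 ?A"
    unfolding rescale_def by (rule C2_rescale[OF A0(1)])
  moreover have "(?A \<longlongrightarrow> 0) at_infinity"
    unfolding rescale_def using tendsto_at_infinity_rescale[OF A0(4)] assms(4) by simp
  moreover have "?A x \<le> ?A 0" for x
    unfolding rescale_def using A0(5) by (simp add: mult_left_mono)
  ultimately show ?thesis
    unfolding solves_P_def I_def using int by blast
qed

lemma ground_state_rescale_of_solves_P:
  fixes A :: "real^'n \<Rightarrow> real"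
  assumes "solves_P p k A" and "p > 1" and "\<forall>x. A x > 0" and "radial A"
    and "\<omega> = 1 + k * integral UNIV (\<lambda>y. (A y)^2)" and "\<omega> > 0"
  shows "ground_state p (rescale p (1 / \<omega>) A)"
proof -
  let ?B = "rescale p (1 / \<omega>) A"
  have A: "C2 A" "\<And>x. laplacian A x - \<omega> * A x + A x powr p = 0"
    "(A \<longlongrightarrow> 0) at_infinity" "\<And>x. A x \<le> A 0"
    using assms(1,5) unfolding solves_P_def by (auto simp: algebra_simps)
  have "laplacian ?B x - \<omega> * (1 / \<omega>) * ?B x + ?B x powr p = 0" for x
  proof -
    have "1 / \<omega> > 0" "A (sqrt (1 / \<omega>) *\<^sub>R x) \<ge> 0"
      using assms(3,6) less_imp_le by auto
    from laplacian_rescale_equation[OF A(1) assms(2) this, where \<mu> = \<omega>]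
    show ?thesis using A(2) by simp
  qed
  then have "laplacian ?B x - ?B x + ?B x powr p = 0" for x
    using assms(6) by simp
  moreover have "C2 ?B"
    unfolding rescale_def by (rule C2_rescale[OF A(1)])
  moreover have "(?B \<longlongrightarrow> 0) at_infinity"
    unfolding rescale_def using tendsto_at_infinity_rescale[OF A(3)] assms(6) by simp
  moreover have "?B x \<le> ?B 0" "?B x > 0" for x
    unfolding rescale_def using A(4) assms(3,6) by (simp_all add: mult_left_mono)
  moreover have "radial ?B"
    using assms(4) unfolding radial_def rescale_def by simp
  ultimately show ?thesis
    unfolding ground_state_def by blast
qed

theorem lemma2:
  fixes p :: real and A0 :: "real^'n \<Rightarrow> real" and \<alpha> :: real
  assumes "subcritical CARD('n) p"
    and "ground_state p A0"
    and "\<forall>B :: real^'n \<Rightarrow> real. ground_state p B \<longrightarrow> B = A0"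
    and "(\<lambda>y. (A0 y)^2) integrable_on UNIV"
    and "\<alpha> = integral UNIV (\<lambda>y. (A0 y)^2)"
  shows "(\<forall>k \<omega>. k > 0 \<longrightarrow> \<omega> > 0 \<longrightarrow> fw CARD('n) p \<omega> = k * \<alpha> \<longrightarrow>
            solves_P p k (\<lambda>x. \<omega> powr (1 / (p - 1)) * A0 (sqrt \<omega> *\<^sub>R x)))
       \<and> (\<forall>k (A :: real^'n \<Rightarrow> real). k > 0 \<longrightarrow> solves_P p k A \<longrightarrow> (\<forall>x. A x > 0) \<longrightarrow> radial A \<longrightarrow>
            (\<exists>\<omega>>0. fw CARD('n) p \<omega> = k * \<alpha> \<and>
                (\<forall>x. A x = \<omega> powr (1 / (p - 1)) * A0 (sqrt \<omega> *\<^sub>R x))))"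
proof (intro conjI allI impI)
  have p: "p > 1"
    using assms(1) unfolding subcritical_def by blast
  have \<alpha>: "((\<lambda>y. (A0 y)^2) has_integral \<alpha>) UNIV"
    using assms(4,5) by (simp add: has_integral_integral)
  show "solves_P p k (\<lambda>x. \<omega> powr (1 / (p - 1)) * A0 (sqrt \<omega> *\<^sub>R x))"
    if "\<omega> > 0" and "fw CARD('n) p \<omega> = k * \<alpha>" for k \<omega> :: real
    using solves_P_rescale_of_ground_state[OF assms(2) p \<alpha> that] unfolding rescale_def .
  fix k :: real and A :: "real^'n \<Rightarrow> real"
  assume "k > 0" and A: "solves_P p k A" "\<forall>x. A x > 0" "radial A"
  define \<omega> where "\<omega> = 1 + k * integral UNIV (\<lambda>y. (A y)^2)"
  have "integral UNIV (\<lambda>y. (A y)^2) \<ge> 0"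
    using A(1) unfolding solves_P_def by (simp add: integral_nonneg)
  then have "\<omega> > 0"
    using \<open>k > 0\<close> by (simp add: \<omega>_def add_pos_nonneg)
  then have "rescale p (1 / \<omega>) A = A0"
    using assms(3) ground_state_rescale_of_solves_P[OF A(1) p A(2,3) \<omega>_def] by blast
  then have A_eq: "A = rescale p \<omega> A0"
    using rescale_rescale_inverse[OF \<open>\<omega> > 0\<close>] by metis
  have "integral UNIV (\<lambda>y. (A y)^2) = \<omega> powr (2 / (p - 1) - CARD('n) / 2) * \<alpha>"
    using has_integral_rescale_square[OF \<alpha> \<open>\<omega> > 0\<close>] A_eq by (simp add: integral_unique)
  then have "fw CARD('n) p \<omega> = k * \<alpha>"
    using fw_eq_iff[OF \<open>\<omega> > 0\<close>] \<omega>_def by simp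
  then show "\<exists>\<omega>>0. fw CARD('n) p \<omega> = k * \<alpha> \<and> (\<forall>x. A x = \<omega> powr (1 / (p - 1)) * A0 (sqrt \<omega> *\<^sub>R x))"
    using \<open>\<omega> > 0\<close> A_eq unfolding rescale_def by blast
qed

end
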